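(* Let $D,E$ be $\mathcal{G}$-spaces and $L>0$. The mapping which takes $(\psi,x_1,x_2)\in\mathcal{G}(L,\ell_1+\ell_2)\times D(\ell_1)\times E(\ell_2)$ to the equivalence class of $(\psi_2\otimes\psi_1,x_2,x_1)$ in $(E\otimes D)(L)$, where $\psi=\psi_1\otimes\psi_2$ is the unique decomposition with $\psi_i\in\mathcal{G}(\ell'_i,\ell_i)$ and $\ell'_1+\ell'_2=L$, induces a continuous map $B:(D\otimes E)(L)\to(E\otimes D)(L)$ which is a homeomorphism. This family of homeomorphisms is not natural with respect to $L>0$.
   Context: $\mathcal{G}$ is the category whose objects are the real numbers $\ell>0$, with $\mathcal{G}(\ell_1,\ell_2)$ the set of nondecreasing homeomorphisms $[0,\ell_1]\to[0,\ell_2]$, equipped with the compact-open topology, composition given by composition of maps. For $\phi_i:[0,\ell_i]\to[0,\ell'_i]$, $\phi_1\otimes\phi_2:[0,\ell_1+\ell_2]\to[0,\ell'_1+\ell'_2]$ is $\phi_1(t)$ for $0\le t\le\ell_1$ and $\phi_2(t-\ell_1)+\ell'_1$ for $\ell_1\le t\le\ell_1+\ell_2$. Every $\psi\in\mathcal{G}(L,\ell_1+\ell_2)$ decomposes uniquely as $\psi_1\otimes\psi_2$ as described. All spaces are ($\Delta$-generated) topological spaces. A $\mathcal{G}$-space is an enriched (continuous) functor $D:\mathcal{G}^{op}\to\mathbf{Top}$; write $x\phi=D(\phi)(x)$. The tensor product $D\otimes E=\int^{(\ell_1,\ell_2)}\mathcal{G}(-,\ell_1+\ell_2)\times D(\ell_1)\times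 E(\ell_2)$; concretely $(D\otimes E)(L)$ is the quotient of $\bigsqcup_{(\ell_1,\ell_2)}\mathcal{G}(L,\ell_1+\ell_2)\times D(\ell_1)\times E(\ell_2)$ by the identifications $(\psi,x_1\phi_1,x_2\phi_2)\sim((\phi_1\otimes\phi_2)\psi,x_1,x_2)$, and a map $\omega:L'\to L$ acts by $(\psi,x_1,x_2)\mapsto(\psi\omega,x_1,x_2)$. Naturality in $L$ would mean compatibility of $B$ with these actions of $\mathcal{G}$ on $D\otimes E$ and $E\otimes D$. *)

theory Defs
  imports "HOL-Analysis.Analysis" "HOL-Homology.Simplices"
begin

definition simplex_top :: "nat \<Rightarrow> (nat \<Rightarrow> real) topology" where
  "simplex_top n = subtopology (powertop_real UNIV) (standard_simplex n)"

definition dgen :: "'a topology \<Rightarrow> 'a topology" where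
  "dgen X = topology (\<lambda>U. U \<subseteq> topspace X \<and>
      (\<forall>n \<sigma>. continuous_map (simplex_top n) X \<sigma> \<longrightarrow>
          openin (simplex_top n) {t \<in> topspace (simplex_top n). \<sigma> t \<in> U}))"

definition delta_generated :: "'a topology \<Rightarrow> bool" where
  "delta_generated X \<longleftrightarrow> dgen X = X"

definition dprod :: "'a topology \<Rightarrow> 'b topology \<Rightarrow> ('a \<times> 'b) topology" where
  "dprod X Y = dgen (prod_topology X Y)"

definition quotient_topology :: "'a topology \<Rightarrow> ('a \<Rightarrow> 'b) \<Rightarrow> 'b topology" where
  "quotient_topology X f = topology (\<lambda>U. U \<subseteq> f ` topspace X \<and>
      openin X {x \<in> topspace X. f x \<in> U})"

text \<open>Morphisms l1 -> l2: nondecreasing homeomorphisms [0,l1] -> [0,l2],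
 represented as functions extensional on [0,l1].\<close>
definition Gset :: "real \<Rightarrow> real \<Rightarrow> (real \<Rightarrow> real) set" where
  "Gset l1 l2 = {f. f \<in> extensional {0..l1} \<and> mono_on {0..l1} f \<and>
      homeomorphic_map (subtopology euclideanreal {0..l1}) (subtopology euclideanreal {0..l2}) f}"

text \<open>Compact-open topology (Delta-ified, as all spaces are Delta-generated).\<close>
definition Gtop :: "real \<Rightarrow> real \<Rightarrow> (real \<Rightarrow> real) topology" where
  "Gtop l1 l2 = dgen (subtopology
      (topology_generated_by {{f. f ` K \<subseteq> U} | K U. compact K \<and> K \<subseteq> {0..l1} \<and> open U})
      (Gset l1 l2))"

definition Gid :: "real \<Rightarrow> real \<Rightarrow> real" where
  "Gid l = restrict id {0..l}"

definition Gcomp :: "real \<Rightarrow> (real \<Rightarrow> real) \<Rightarrow> (real \<Rightarrow> real) \<Rightarrow> real \<Rightarrow> real" where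
  "Gcomp l0 \<phi> \<psi> = restrict (\<phi> \<circ> \<psi>) {0..l0}"

definition Gtens :: "real \<Rightarrow> real \<Rightarrow> real \<Rightarrow> (real \<Rightarrow> real) \<Rightarrow> (real \<Rightarrow> real) \<Rightarrow> real \<Rightarrow> real" where
  "Gtens a1 a2 b1 \<phi>1 \<phi>2 = restrict (\<lambda>t. if t \<le> a1 then \<phi>1 t else \<phi>2 (t - a1) + b1) {0..a1+a2}"

text \<open>Decomposition \<psi> = \<psi>1 \<otimes> \<psi>2 of \<psi> : [0,L] -> [0,l1+l2]:
 split point s = \<psi>^{-1}(l1), \<psi>1 : [0,s] -> [0,l1], \<psi>2 : [0,L-s] -> [0,l2].\<close>
definition Gsplit_pt :: "real \<Rightarrow> real \<Rightarrow> (real \<Rightarrow> real) \<Rightarrow> real" where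
  "Gsplit_pt L l1 \<psi> = (THE s. s \<in> {0..L} \<and> \<psi> s = l1)"

definition Gsplit1 :: "real \<Rightarrow> real \<Rightarrow> (real \<Rightarrow> real) \<Rightarrow> real \<Rightarrow> real" where
  "Gsplit1 L l1 \<psi> = restrict \<psi> {0..Gsplit_pt L l1 \<psi>}"

definition Gsplit2 :: "real \<Rightarrow> real \<Rightarrow> (real \<Rightarrow> real) \<Rightarrow> real \<Rightarrow> real" where
  "Gsplit2 L l1 \<psi> = restrict (\<lambda>t. \<psi> (t + Gsplit_pt L l1 \<psi>) - l1) {0..L - Gsplit_pt L l1 \<psi>}"

text \<open>A G-space: spaces D(l) for l > 0 and actions D(\<phi>) : D(l2) -> D(l1) for
 \<phi> \<in> G(l1,l2), written gact D l1 l2 \<phi> x = x\<phi>.\<close>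
record 'a gspace =
  gsp :: "real \<Rightarrow> 'a topology"
  gact :: "real \<Rightarrow> real \<Rightarrow> (real \<Rightarrow> real) \<Rightarrow> 'a \<Rightarrow> 'a"

definition G_space :: "'a gspace \<Rightarrow> bool" where
  "G_space D \<longleftrightarrow>
     (\<forall>l>0. delta_generated (gsp D l)) \<and>
     (\<forall>l1>0. \<forall>l2>0. continuous_map (dprod (Gtop l1 l2) (gsp D l2)) (gsp D l1)
                        (\<lambda>(\<phi>, x). gact D l1 l2 \<phi> x)) \<and>
     (\<forall>l>0. \<forall>x\<in>topspace (gsp D l). gact D l l (Gid l) x = x) \<and>
     (\<forall>l0>0. \<forall>l1>0. \<forall>l2>0. \<forall>\<psi>\<in>Gset l0 l1. \<forall>\<phi>\<in>Gset l1 l2. \<forall>x\<in>topspace (gsp D l2).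
        gact D l0 l2 (Gcomp l0 \<phi> \<psi>) x = gact D l0 l1 \<psi> (gact D l1 l2 \<phi> x))"

definition tens_index :: "(real \<times> real) set" where
  "tens_index = {p. 0 < fst p \<and> 0 < snd p}"

definition tens_sum :: "'a gspace \<Rightarrow> 'b gspace \<Rightarrow> real \<Rightarrow>
    ((real \<times> real) \<times> (real \<Rightarrow> real) \<times> 'a \<times> 'b) topology" where
  "tens_sum D E L = sum_topology
     (\<lambda>(l1, l2). dprod (Gtop L (l1 + l2)) (dprod (gsp D l1) (gsp E l2))) tens_index"

definition tens_gen :: "'a gspace \<Rightarrow> 'b gspace \<Rightarrow> real \<Rightarrow>
    ((real \<times> real) \<times> (real \<Rightarrow> real) \<times> 'a \<times> 'b) \<Rightarrow>
    ((real \<times> real) \<times> (real \<Rightarrow> real) \<times> 'a \<times> 'b) \<Rightarrow> bool" where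
  "tens_gen D E L r r' \<longleftrightarrow>
    (\<exists>l1 l2 m1 m2 \<psi> \<phi>1 \<phi>2 x1 x2.
       0 < l1 \<and> 0 < l2 \<and> 0 < m1 \<and> 0 < m2 \<and>
       \<psi> \<in> Gset L (l1 + l2) \<and> \<phi>1 \<in> Gset l1 m1 \<and> \<phi>2 \<in> Gset l2 m2 \<and>
       x1 \<in> topspace (gsp D m1) \<and> x2 \<in> topspace (gsp E m2) \<and>
       r = ((l1, l2), \<psi>, gact D l1 m1 \<phi>1 x1, gact E l2 m2 \<phi>2 x2) \<and>
       r' = ((m1, m2), Gcomp L (Gtens l1 l2 m1 \<phi>1 \<phi>2) \<psi>, x1, x2))"

definition tens_cls :: "'a gspace \<Rightarrow> 'b gspace \<Rightarrow> real \<Rightarrow>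
    ((real \<times> real) \<times> (real \<Rightarrow> real) \<times> 'a \<times> 'b) \<Rightarrow>
    ((real \<times> real) \<times> (real \<Rightarrow> real) \<times> 'a \<times> 'b) set" where
  "tens_cls D E L r = {r'. equivclp (tens_gen D E L) r r'}"

definition tens_top :: "'a gspace \<Rightarrow> 'b gspace \<Rightarrow> real \<Rightarrow>
    ((real \<times> real) \<times> (real \<Rightarrow> real) \<times> 'a \<times> 'b) set topology" where
  "tens_top D E L = quotient_topology (tens_sum D E L) (tens_cls D E L)"

definition tens_act :: "'a gspace \<Rightarrow> 'b gspace \<Rightarrow> real \<Rightarrow> (real \<Rightarrow> real) \<Rightarrow>
    ((real \<times> real) \<times> (real \<Rightarrow> real) \<times> 'a \<times> 'b) set \<Rightarrow>
    ((real \<times> real) \<times> (real \<Rightarrow> real) \<times> 'a \<times> 'b) set" where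
  "tens_act D E L' \<omega> c =
     the_elem ((\<lambda>((l1, l2), \<psi>, x1, x2). tens_cls D E L' ((l1, l2), Gcomp L' \<psi> \<omega>, x1, x2)) ` c)"

definition tens_swap :: "real \<Rightarrow> ((real \<times> real) \<times> (real \<Rightarrow> real) \<times> 'a \<times> 'b) \<Rightarrow>
    ((real \<times> real) \<times> (real \<Rightarrow> real) \<times> 'b \<times> 'a)" where
  "tens_swap L r = (case r of ((l1, l2), \<psi>, x1, x2) \<Rightarrow>
      ((l2, l1),
       Gtens (L - Gsplit_pt L l1 \<psi>) (Gsplit_pt L l1 \<psi>) l2 (Gsplit2 L l1 \<psi>) (Gsplit1 L l1 \<psi>),
       x2, x1))"

definition braid :: "'a gspace \<Rightarrow> 'b gspace \<Rightarrow> real \<Rightarrow>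
    ((real \<times> real) \<times> (real \<Rightarrow> real) \<times> 'a \<times> 'b) set \<Rightarrow>
    ((real \<times> real) \<times> (real \<Rightarrow> real) \<times> 'b \<times> 'a) set" where
  "braid D E L c = the_elem ((\<lambda>r. tens_cls E D L (tens_swap L r)) ` c)"

definition braid_natural :: "'a gspace \<Rightarrow> 'b gspace \<Rightarrow> bool" where
  "braid_natural D E \<longleftrightarrow>
     (\<forall>L>0. \<forall>L'>0. \<forall>\<omega>\<in>Gset L' L. \<forall>c\<in>topspace (tens_top D E L).
        braid D E L' (tens_act D E L' \<omega> c) = tens_act E D L' \<omega> (braid D E L c))"

end

theory Submission
  imports Defs
begin

text \<open>
  A representative \<open>(\<psi>, x\<^sub>1, x\<^sub>2)\<close> is swapped by cutting \<open>[0, L]\<close> at the split point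
  \<open>s = \<psi>\<^sup>-\<^sup>1(l\<^sub>1)\<close> and gluing the two pieces \<open>\<psi> = \<psi>\<^sub>1 \<otimes> \<psi>\<^sub>2\<close> in the opposite order.
  A generating identification replaces \<open>\<psi>\<close> by \<open>(\<phi>\<^sub>1 \<otimes> \<phi>\<^sub>2)\<psi> = \<phi>\<^sub>1\<psi>\<^sub>1 \<otimes> \<phi>\<^sub>2\<psi>\<^sub>2\<close>, which has the
  same split point, so by uniqueness of the decomposition the swap respects the identifications
  and descends to \<open>B\<close>; as it is an involution on representatives, the map \<open>B\<close> for \<open>(E, D)\<close>
  inverts the one for \<open>(D, E)\<close>.
  Continuity reduces, through the quotient, coproduct and \<open>\<Delta>\<close>-ified product topologies, to
  continuity of \<open>\<psi> \<mapsto> \<psi>\<^sub>2 \<otimes> \<psi>\<^sub>1\<close>. On monotone maps the compact-open topology is the topology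
  of uniform convergence, \<open>\<psi> \<mapsto> s\<close> is continuous, and \<open>\<psi>\<^sub>2 \<otimes> \<psi>\<^sub>1\<close> is \<open>\<psi> \<otimes> \<psi>\<close> translated
  by \<open>s\<close>.

  The split point is an invariant of the classes. For one-point \<open>\<G>\<close>-spaces, \<open>\<psi> = id\<close> on
  \<open>[0, 2]\<close> and \<open>\<omega>(t) = t\<^sup>2/2\<close>, the two sides of the naturality square have split points
  \<open>2 - \<surd>2\<close> and \<open>\<surd>2\<close>.
\<close>

lemma Gset_iff:
  assumes "0 < a" "0 < b"
  shows "f \<in> Gset a b \<longleftrightarrow> f \<in> extensional {0..a} \<and> continuous_on {0..a} f \<and>
     strict_mono_on {0..a} f \<and> f 0 = 0 \<and> f a = b"
proof
  assume "f \<in> Gset a b"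
  then have ext: "f \<in> extensional {0..a}" and mono: "mono_on {0..a} f"
    and homeo: "homeomorphic_map (top_of_set {0..a}) (top_of_set {0..b}) f"
    by (auto simp: Gset_def)
  have cont: "continuous_on {0..a} f" and maps: "f ` {0..a} \<subseteq> {0..b}"
    using homeomorphic_imp_continuous_map[OF homeo] by auto
  have onto: "f ` {0..a} = {0..b}"
    using homeomorphic_imp_surjective_map[OF homeo] by simp
  have "inj_on f {0..a}"
    using homeomorphic_imp_injective_map[OF homeo] by simp
  with mono have smono: "strict_mono_on {0..a} f"
    by (rule mono_imp_strict_mono)
  have le: "f 0 \<le> f t" "f t \<le> f a" if "t \<in> {0..a}" for t
    using strict_mono_on_leD[OF smono] that assms by auto
  have "0 \<in> f ` {0..a}" "b \<in> f ` {0..a}"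
    using onto assms by auto
  then obtain t0 t1 where "t0 \<in> {0..a}" "f t0 = 0" "t1 \<in> {0..a}" "f t1 = b"
    by (metis imageE)
  with le have "f 0 \<le> 0" "b \<le> f a" by fastforce+
  moreover have "f 0 \<in> {0..b}" "f a \<in> {0..b}"
    using maps assms by (simp_all add: image_subset_iff)
  ultimately have "f 0 = 0" "f a = b" by auto
  with ext cont smono show "f \<in> extensional {0..a} \<and> continuous_on {0..a} f \<and>
     strict_mono_on {0..a} f \<and> f 0 = 0 \<and> f a = b"
    by blast
next
  assume "f \<in> extensional {0..a} \<and> continuous_on {0..a} f \<and>
     strict_mono_on {0..a} f \<and> f 0 = 0 \<and> f a = b"
  then have ext: "f \<in> extensional {0..a}" and cont: "continuous_on {0..a} f"
    and smono: "strict_mono_on {0..a} f" and f0: "f 0 = 0" and fa: "f a = b"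
    by auto
  have "f ` {0..a} \<subseteq> {0..b}"
    using strict_mono_on_leD[OF smono] assms f0 fa by fastforce
  moreover have "{0..b} \<subseteq> f ` {0..a}"
  proof
    fix y assume "y \<in> {0..b}"
    then have "\<exists>x\<ge>0. x \<le> a \<and> f x = y"
      using IVT'[of f 0 y a] f0 fa assms cont by auto
    then show "y \<in> f ` {0..a}" by auto
  qed
  ultimately have "homeomorphic_map (top_of_set {0..a}) (top_of_set {0..b}) f"
    using cont strict_mono_on_imp_inj_on[OF smono]
    by (intro continuous_imp_homeomorphic_map)
       (auto simp: compact_space_subtopology Hausdorff_space_subtopology)
  with ext strict_mono_on_imp_mono_on[OF smono] show "f \<in> Gset a b"
    by (auto simp: Gset_def)
qed

lemma GsetD:
  assumes "f \<in> Gset a b" "0 < a" "0 < b"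
  shows "f \<in> extensional {0..a}" "continuous_on {0..a} f" "strict_mono_on {0..a} f"
    "f 0 = 0" "f a = b"
  using assms Gset_iff by blast+

lemma Gset_less_iff:
  assumes "f \<in> Gset a b" "0 < a" "0 < b" "t \<in> {0..a}" "u \<in> {0..a}"
  shows "f t < f u \<longleftrightarrow> t < u"
  using strict_mono_on_less[OF GsetD(3)[OF assms(1-3)] assms(4,5)] .

lemma Gset_le_iff:
  assumes "f \<in> Gset a b" "0 < a" "0 < b" "t \<in> {0..a}" "u \<in> {0..a}"
  shows "f t \<le> f u \<longleftrightarrow> t \<le> u"
  using strict_mono_on_less_eq[OF GsetD(3)[OF assms(1-3)] assms(4,5)] .

lemma Gset_range:
  assumes "f \<in> Gset a b" "0 < a" "0 < b" "t \<in> {0..a}"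
  shows "f t \<in> {0..b}"
  using Gset_le_iff[OF assms(1-3), of 0 t] Gset_le_iff[OF assms(1-3), of t a]
    GsetD(4,5)[OF assms(1-3)] assms(2,4) by auto

lemma Gset_surj:
  assumes "f \<in> Gset a b" "0 < a" "0 < b" "y \<in> {0..b}"
  obtains t where "t \<in> {0..a}" "f t = y"
  using IVT'[of f 0 y a] assms GsetD[OF assms(1-3)] by fastforce

lemma Gcomp_apply: "t \<in> {0..a} \<Longrightarrow> Gcomp a g f t = g (f t)"
  by (simp add: Gcomp_def)

lemma Gtens_apply: "t \<in> {0..a1+a2} \<Longrightarrow>
   Gtens a1 a2 b1 f1 f2 t = (if t \<le> a1 then f1 t else f2 (t - a1) + b1)"
  by (simp add: Gtens_def)

lemma Gcomp_assoc:
  assumes "\<And>t. t \<in> {0..a} \<Longrightarrow> h t \<in> {0..b}"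
  shows "Gcomp a (Gcomp b g f) h = Gcomp a g (Gcomp a f h)"
  using assms by (auto simp: Gcomp_def fun_eq_iff)

lemma Gid_Gset: "0 < a \<Longrightarrow> Gid a \<in> Gset a a"
  unfolding Gset_iff[of a a] Gid_def
  by (auto simp: strict_mono_on_def intro!: continuous_on_cong[THEN iffD1, OF refl _ continuous_on_id])

lemma Gcomp_Gset:
  assumes f: "f \<in> Gset a b" and g: "g \<in> Gset b c" and pos: "0 < a" "0 < b" "0 < c"
  shows "Gcomp a g f \<in> Gset a c"
proof -
  have range: "f ` {0..a} \<subseteq> {0..b}"
    using Gset_range[OF f pos(1,2)] by auto
  have "continuous_on {0..a} (g \<circ> f)"
    using continuous_on_compose continuous_on_subset GsetD(2)[OF f pos(1,2)]
      GsetD(2)[OF g pos(2,3)] range by blast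
  then have "continuous_on {0..a} (Gcomp a g f)"
    by (rule continuous_on_cong[THEN iffD1, rotated 2]) (auto simp: Gcomp_apply)
  moreover have "strict_mono_on {0..a} (Gcomp a g f)"
  proof (rule strict_mono_onI)
    fix r s assume rs: "r \<in> {0..a}" "s \<in> {0..a}" "r < s"
    then have "f r < f s" "f r \<in> {0..b}" "f s \<in> {0..b}"
      using Gset_less_iff[OF f pos(1,2)] Gset_range[OF f pos(1,2)] by auto
    then show "Gcomp a g f r < Gcomp a g f s"
      using Gset_less_iff[OF g pos(2,3)] rs by (simp add: Gcomp_apply)
  qed
  ultimately show ?thesis
    using GsetD[OF f pos(1,2)] GsetD[OF g pos(2,3)] pos
    by (auto simp: Gset_iff Gcomp_apply Gcomp_def)
qed

lemma Gtens_Gset: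
  assumes f1: "f1 \<in> Gset a1 b1" and f2: "f2 \<in> Gset a2 b2"
    and pos: "0 < a1" "0 < b1" "0 < a2" "0 < b2"
  shows "Gtens a1 a2 b1 f1 f2 \<in> Gset (a1 + a2) (b1 + b2)"
proof -
  note F1 = GsetD[OF f1 pos(1,2)] and F2 = GsetD[OF f2 pos(3,4)]
  have "continuous_on {0..a1+a2} (\<lambda>t. if t \<le> a1 then f1 t else f2 (t - a1) + b1)"
  proof (rule continuous_on_cases_le)
    show "continuous_on {t \<in> {0..a1 + a2}. t \<le> a1} f1"
      by (rule continuous_on_subset[OF F1(2)]) auto
    have "continuous_on {t \<in> {0..a1 + a2}. a1 \<le> t} (f2 \<circ> (\<lambda>t. t - a1))"
      by (rule continuous_on_compose)
         (auto intro!: continuous_intros intro: continuous_on_subset[OF F2(2)])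
    then show "continuous_on {t \<in> {0..a1 + a2}. a1 \<le> t} (\<lambda>t. f2 (t - a1) + b1)"
      by (auto intro!: continuous_intros simp: o_def)
  qed (use F1 F2 in \<open>auto intro: continuous_intros\<close>)
  then have "continuous_on {0..a1+a2} (Gtens a1 a2 b1 f1 f2)"
    by (rule continuous_on_cong[THEN iffD1, rotated 2]) (auto simp: Gtens_apply)
  moreover have "strict_mono_on {0..a1+a2} (Gtens a1 a2 b1 f1 f2)"
  proof (rule strict_mono_onI)
    fix r s assume rs: "r \<in> {0..a1+a2}" "s \<in> {0..a1+a2}" "r < s"
    have "f1 r \<le> b1" if "r \<le> a1"
      using Gset_range[OF f1 pos(1,2)] rs that by auto
    moreover have "0 < f2 (s - a1)" if "a1 < s"
      using Gset_less_iff[OF f2 pos(3,4), of 0 "s - a1"] F2 rs that by auto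
    ultimately show "Gtens a1 a2 b1 f1 f2 r < Gtens a1 a2 b1 f1 f2 s"
      using Gset_less_iff[OF f1 pos(1,2), of r s] Gset_less_iff[OF f2 pos(3,4), of "r - a1" "s - a1"] rs
      by (auto simp: Gtens_apply)
  qed
  ultimately show ?thesis
    using F1 F2 pos by (auto simp: Gset_iff Gtens_apply Gtens_def)
qed

lemma Gcomp_Gtens:
  assumes f1: "f1 \<in> Gset a1 b1" and f2: "f2 \<in> Gset a2 b2"
    and pos: "0 < a1" "0 < b1" "0 < a2" "0 < b2"
  shows "Gcomp (a1 + a2) (Gtens b1 b2 c1 g1 g2) (Gtens a1 a2 b1 f1 f2)
       = Gtens a1 a2 c1 (Gcomp a1 g1 f1) (Gcomp a2 g2 f2)"
proof (rule extensionalityI[of _ "{0..a1+a2}"])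
  fix t assume t: "t \<in> {0..a1+a2}"
  show "Gcomp (a1 + a2) (Gtens b1 b2 c1 g1 g2) (Gtens a1 a2 b1 f1 f2) t
      = Gtens a1 a2 c1 (Gcomp a1 g1 f1) (Gcomp a2 g2 f2) t"
  proof (cases "t \<le> a1")
    case True
    then have "f1 t \<in> {0..b1}"
      using Gset_range[OF f1 pos(1,2)] t by auto
    with t True pos show ?thesis
      by (simp add: Gcomp_apply Gtens_apply)
  next
    case False
    then have "f2 (t - a1) \<in> {0..b2}" "0 < f2 (t - a1)"
      using Gset_range[OF f2 pos(3,4)] Gset_less_iff[OF f2 pos(3,4), of 0 "t - a1"]
        GsetD(4)[OF f2 pos(3,4)] t by auto
    with t False pos show ?thesis
      by (simp add: Gcomp_apply Gtens_apply)
  qed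
qed (simp_all add: Gcomp_def Gtens_def)

section \<open>Splitting a morphism\<close>

lemma Gsplit_pt_eqI:
  assumes "f \<in> Gset a b" "0 < a" "0 < b" "s \<in> {0..a}" "f s = c"
  shows "Gsplit_pt a c f = s"
  unfolding Gsplit_pt_def
  by (rule the_equality)
     (use assms strict_mono_on_eqD[OF GsetD(3)[OF assms(1-3)]] in auto)

lemma Gsplit_pt:
  assumes "f \<in> Gset a b" "0 < a" "0 < b" "c \<in> {0..b}"
  shows "Gsplit_pt a c f \<in> {0..a}" "f (Gsplit_pt a c f) = c"
proof -
  obtain t where "t \<in> {0..a}" "f t = c"
    using Gset_surj[OF assms] .
  moreover from this have "Gsplit_pt a c f = t"
    using Gsplit_pt_eqI[OF assms(1-3)] by blast
  ultimately show "Gsplit_pt a c f \<in> {0..a}" "f (Gsplit_pt a c f) = c"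
    by simp_all
qed

lemma Gsplit_pt_Gcomp:
  assumes \<psi>: "\<psi> \<in> Gset L b" and \<omega>: "\<omega> \<in> Gset L' L" and pos: "0 < L'" "0 < L" "0 < b"
    and c: "c \<in> {0..b}"
  shows "Gsplit_pt L' c (Gcomp L' \<psi> \<omega>) = Gsplit_pt L' (Gsplit_pt L c \<psi>) \<omega>"
proof (rule Gsplit_pt_eqI[OF Gcomp_Gset[OF \<omega> \<psi> pos] pos(1,3)])
  have s: "Gsplit_pt L c \<psi> \<in> {0..L}" "\<psi> (Gsplit_pt L c \<psi>) = c"
    using Gsplit_pt[OF \<psi> pos(2,3) c] by simp_all
  show "Gsplit_pt L' (Gsplit_pt L c \<psi>) \<omega> \<in> {0..L'}"
    and "Gcomp L' \<psi> \<omega> (Gsplit_pt L' (Gsplit_pt L c \<psi>) \<omega>) = c"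
    using Gsplit_pt[OF \<omega> pos(1,2) s(1)] s(2) by (simp_all add: Gcomp_apply)
qed

context
  fixes a1 a2 b1 b2 :: real and f1 f2 :: "real \<Rightarrow> real"
  assumes f1: "f1 \<in> Gset a1 b1" and f2: "f2 \<in> Gset a2 b2"
    and pos: "0 < a1" "0 < b1" "0 < a2" "0 < b2"
begin

lemma Gsplit_pt_Gtens: "Gsplit_pt (a1 + a2) b1 (Gtens a1 a2 b1 f1 f2) = a1"
  using GsetD(5)[OF f1 pos(1,2)] pos
  by (intro Gsplit_pt_eqI[OF Gtens_Gset[OF f1 f2 pos]]) (simp_all add: Gtens_apply)

lemma Gsplit1_Gtens: "Gsplit1 (a1 + a2) b1 (Gtens a1 a2 b1 f1 f2) = f1"
proof (rule extensionalityI[of _ "{0..a1}"])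
  show "f1 \<in> extensional {0..a1}"
    using GsetD(1)[OF f1 pos(1,2)] .
qed (use pos in \<open>simp_all add: Gsplit1_def Gsplit_pt_Gtens Gtens_apply\<close>)

lemma Gsplit2_Gtens: "Gsplit2 (a1 + a2) b1 (Gtens a1 a2 b1 f1 f2) = f2"
proof (rule extensionalityI[of _ "{0..a2}"])
  show "f2 \<in> extensional {0..a2}"
    using GsetD(1)[OF f2 pos(3,4)] .
  fix t assume "t \<in> {0..a2}"
  then show "Gsplit2 (a1 + a2) b1 (Gtens a1 a2 b1 f1 f2) t = f2 t"
    using GsetD(4,5)[OF f1 pos(1,2)] GsetD(4)[OF f2 pos(3,4)] pos
    by (cases "t = 0") (simp_all add: Gsplit2_def Gsplit_pt_Gtens Gtens_apply)
qed (simp add: Gsplit2_def Gsplit_pt_Gtens)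

end

definition Gswap :: "real \<Rightarrow> real \<Rightarrow> real \<Rightarrow> (real \<Rightarrow> real) \<Rightarrow> real \<Rightarrow> real" where
  "Gswap L l1 l2 \<psi> =
     Gtens (L - Gsplit_pt L l1 \<psi>) (Gsplit_pt L l1 \<psi>) l2 (Gsplit2 L l1 \<psi>) (Gsplit1 L l1 \<psi>)"

lemma tens_swap_simp: "tens_swap L ((l1, l2), \<psi>, x1, x2) = ((l2, l1), Gswap L l1 l2 \<psi>, x2, x1)"
  by (simp add: tens_swap_def Gswap_def)

lemma Gswap_Gtens:
  assumes "f1 \<in> Gset a1 b1" "f2 \<in> Gset a2 b2" "0 < a1" "0 < b1" "0 < a2" "0 < b2"
  shows "Gswap (a1 + a2) b1 b2 (Gtens a1 a2 b1 f1 f2) = Gtens a2 a1 b2 f2 f1"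
  by (simp add: Gswap_def Gsplit_pt_Gtens[OF assms] Gsplit1_Gtens[OF assms] Gsplit2_Gtens[OF assms])

locale Gsplitting =
  fixes L l1 l2 :: real and \<psi> :: "real \<Rightarrow> real"
  assumes \<psi>: "\<psi> \<in> Gset L (l1 + l2)" and pos: "0 < L" "0 < l1" "0 < l2"
begin

definition s where "s = Gsplit_pt L l1 \<psi>"

abbreviation "\<psi>\<^sub>1 \<equiv> Gsplit1 L l1 \<psi>"
abbreviation "\<psi>\<^sub>2 \<equiv> Gsplit2 L l1 \<psi>"

lemma sum_pos: "0 < l1 + l2"
  using pos by simp

lemma s: "0 < s" "s < L" "\<psi> s = l1"
proof -
  have "s \<in> {0..L}" "\<psi> s = l1"
    using Gsplit_pt[OF \<psi> pos(1) sum_pos, of l1] pos unfolding s_def by auto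
  moreover have "\<psi> 0 = 0" "\<psi> L = l1 + l2"
    using GsetD[OF \<psi> pos(1) sum_pos] by simp_all
  ultimately show "0 < s" "s < L" "\<psi> s = l1"
    using pos by (auto simp: less_le)
qed

lemma Gsplit1_Gset: "\<psi>\<^sub>1 \<in> Gset s l1"
proof -
  have "continuous_on {0..s} \<psi>\<^sub>1"
    using continuous_on_subset[OF GsetD(2)[OF \<psi> pos(1) sum_pos]] s
    by (auto simp: Gsplit1_def s_def[symmetric] intro: continuous_on_cong[THEN iffD1, OF refl])
  moreover have "strict_mono_on {0..s} \<psi>\<^sub>1"
    using Gset_less_iff[OF \<psi> pos(1) sum_pos] s
    by (auto simp: strict_mono_on_def Gsplit1_def s_def[symmetric])
  ultimately show ?thesis
    using s pos GsetD[OF \<psi> pos(1) sum_pos]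
    by (auto simp: Gset_iff Gsplit1_def s_def[symmetric])
qed

lemma Gsplit2_Gset: "\<psi>\<^sub>2 \<in> Gset (L - s) l2"
proof -
  have "continuous_on {0..L - s} (\<psi> \<circ> (\<lambda>t. t + s))"
    by (rule continuous_on_compose)
       (use s in \<open>auto intro!: continuous_intros
          intro: continuous_on_subset[OF GsetD(2)[OF \<psi> pos(1) sum_pos]]\<close>)
  then have "continuous_on {0..L - s} (\<lambda>t. \<psi> (t + s) - l1)"
    by (auto intro!: continuous_intros simp: o_def)
  then have "continuous_on {0..L - s} \<psi>\<^sub>2"
    by (rule continuous_on_cong[THEN iffD1, rotated 2]) (auto simp: Gsplit2_def s_def)
  moreover have "strict_mono_on {0..L - s} \<psi>\<^sub>2"
    using Gset_less_iff[OF \<psi> pos(1) sum_pos] s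
    by (auto simp: strict_mono_on_def Gsplit2_def s_def[symmetric])
  ultimately show ?thesis
    using s pos GsetD[OF \<psi> pos(1) sum_pos]
    by (auto simp: Gset_iff Gsplit2_def s_def[symmetric])
qed

lemma Gtens_Gsplit: "Gtens s (L - s) l1 \<psi>\<^sub>1 \<psi>\<^sub>2 = \<psi>"
proof (rule extensionalityI[of _ "{0..L}"])
  show "\<psi> \<in> extensional {0..L}"
    using GsetD(1)[OF \<psi> pos(1) sum_pos] .
  fix t assume t: "t \<in> {0..L}"
  then show "Gtens s (L - s) l1 \<psi>\<^sub>1 \<psi>\<^sub>2 t = \<psi> t"
    using s by (cases "t \<le> s") (simp_all add: Gtens_apply Gsplit1_def Gsplit2_def s_def[symmetric])
qed (simp add: Gtens_def)

lemma Gswap_eq: "Gswap L l1 l2 \<psi> = Gtens (L - s) s l2 \<psi>\<^sub>2 \<psi>\<^sub>1"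
  by (simp add: Gswap_def s_def)

lemma Gswap_Gset: "Gswap L l1 l2 \<psi> \<in> Gset L (l2 + l1)"
  using Gtens_Gset[OF Gsplit2_Gset Gsplit1_Gset] s pos by (simp add: Gswap_eq)

lemma Gsplit_pt_Gswap: "Gsplit_pt L l2 (Gswap L l1 l2 \<psi>) = L - s"
  using Gsplit_pt_Gtens[OF Gsplit2_Gset Gsplit1_Gset] s pos by (simp add: Gswap_eq)

lemma Gswap_Gswap: "Gswap L l2 l1 (Gswap L l1 l2 \<psi>) = \<psi>"
  using Gswap_Gtens[OF Gsplit2_Gset Gsplit1_Gset] s pos Gtens_Gsplit by (simp add: Gswap_eq)

lemma Gsplit_pt_Gcomp_Gtens:
  assumes "g1 \<in> Gset l1 m1" "g2 \<in> Gset l2 m2" "0 < m1" "0 < m2"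
  shows "Gsplit_pt L m1 (Gcomp L (Gtens l1 l2 m1 g1 g2) \<psi>) = s"
proof -
  have g: "Gtens l1 l2 m1 g1 g2 \<in> Gset (l1 + l2) (m1 + m2)"
    using Gtens_Gset[OF assms(1,2)] assms pos by simp
  show ?thesis
    using Gsplit_pt_Gcomp[OF g \<psi>] Gsplit_pt_Gtens[OF assms(1,2)] assms pos
    by (simp add: s_def)
qed

lemma Gswap_Gcomp_Gtens:
  assumes g1: "g1 \<in> Gset l1 m1" and g2: "g2 \<in> Gset l2 m2" and m: "0 < m1" "0 < m2"
  shows "Gswap L m1 m2 (Gcomp L (Gtens l1 l2 m1 g1 g2) \<psi>)
       = Gcomp L (Gtens l2 l1 m2 g2 g1) (Gswap L l1 l2 \<psi>)"
proof -
  have L: "s + (L - s) = L" "(L - s) + s = L"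
    by simp_all
  have pos': "0 < s" "0 < L - s"
    using s by simp_all
  have "Gcomp (s + (L - s)) (Gtens l1 l2 m1 g1 g2) (Gtens s (L - s) l1 \<psi>\<^sub>1 \<psi>\<^sub>2)
      = Gtens s (L - s) m1 (Gcomp s g1 \<psi>\<^sub>1) (Gcomp (L - s) g2 \<psi>\<^sub>2)"
    by (rule Gcomp_Gtens[OF Gsplit1_Gset Gsplit2_Gset pos'(1) pos(2) pos'(2) pos(3)])
  then have "Gswap L m1 m2 (Gcomp L (Gtens l1 l2 m1 g1 g2) \<psi>)
      = Gswap (s + (L - s)) m1 m2 (Gtens s (L - s) m1 (Gcomp s g1 \<psi>\<^sub>1) (Gcomp (L - s) g2 \<psi>\<^sub>2))"
    by (simp only: L Gtens_Gsplit)
  also have "\<dots> = Gtens (L - s) s m2 (Gcomp (L - s) g2 \<psi>\<^sub>2) (Gcomp s g1 \<psi>\<^sub>1)"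
    by (rule Gswap_Gtens[OF Gcomp_Gset[OF Gsplit1_Gset g1] Gcomp_Gset[OF Gsplit2_Gset g2]])
       (use pos pos' m in auto)
  also have "\<dots> = Gcomp ((L - s) + s) (Gtens l2 l1 m2 g2 g1) (Gtens (L - s) s l2 \<psi>\<^sub>2 \<psi>\<^sub>1)"
    by (rule Gcomp_Gtens[OF Gsplit2_Gset Gsplit1_Gset pos'(2) pos(3) pos'(1) pos(2), symmetric])
  finally show ?thesis
    by (simp only: L Gswap_eq)
qed

text \<open>\<open>Gswap \<psi>\<close> is a translate of \<open>\<psi> \<otimes> \<psi>\<close>; this is what makes it depend continuously on \<psi>.\<close>
lemma Gswap_as_shift:
  assumes t: "t \<in> {0..L}"
  shows "Gswap L l1 l2 \<psi> t = Gtens L L (l1 + l2) \<psi> \<psi> (t + s) - l1"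
proof (cases "t \<le> L - s")
  case True
  with t s show ?thesis
    by (simp add: Gswap_eq Gtens_apply Gsplit2_def s_def[symmetric])
next
  case False
  with t s show ?thesis
    by (simp add: Gswap_eq Gtens_apply Gsplit1_def s_def[symmetric] algebra_simps)
qed

end

lemma equivclp_map:
  assumes "equivclp R x y" and "\<And>a b. R a b \<Longrightarrow> S (h a) (h b)"
  shows "equivclp S (h x) (h y)"
  using assms(1)
proof (induction rule: equivclp_induct)
  case (step y z)
  then show ?case
    using assms(2) equivclp_into_equivclp by metis
qed simp

lemma equivclp_invariant:
  assumes "equivclp R x y" and "\<And>a b. R a b \<Longrightarrow> f a = f b"
  shows "f x = f y"
  using assms(1)
proof (induction rule: equivclp_induct)
  case (step y z)
  then show ?case
    using assms(2) by metis
qed simp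

lemma the_elem_image_equivclp_class:
  assumes "\<And>a b. R a b \<Longrightarrow> S (h a) (h b)"
  shows "the_elem ((\<lambda>r. {y. equivclp S (h r) y}) ` {y. equivclp R x y}) = {y. equivclp S (h x) y}"
proof -
  have cls: "{y. equivclp S (h r) y} = {y. equivclp S (h x) y}" if "r \<in> {y. equivclp R x y}" for r
  proof -
    have "equivclp S (h x) (h r)"
      using equivclp_map[of R x r S h] that assms by simp
    then show ?thesis
      by (metis equivclp_sym equivclp_trans)
  qed
  have "(\<lambda>r. {y. equivclp S (h r) y}) ` {y. equivclp R x y} = (\<lambda>r. {y. equivclp S (h x) y}) ` {y. equivclp R x y}"
    by (rule image_cong[OF refl cls])
  also have "\<dots> = {{y. equivclp S (h x) y}}"
    by (rule image_constant[of x]) simp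
  finally show ?thesis
    by simp
qed

lemma tens_genE [consumes 1]:
  assumes "tens_gen D E L r r'"
  obtains (gen) l1 l2 m1 m2 \<psi> \<phi>1 \<phi>2 x1 x2 where
    "0 < l1" "0 < l2" "0 < m1" "0 < m2"
    "\<psi> \<in> Gset L (l1 + l2)" "\<phi>1 \<in> Gset l1 m1" "\<phi>2 \<in> Gset l2 m2"
    "x1 \<in> topspace (gsp D m1)" "x2 \<in> topspace (gsp E m2)"
    "r = ((l1, l2), \<psi>, gact D l1 m1 \<phi>1 x1, gact E l2 m2 \<phi>2 x2)"
    "r' = ((m1, m2), Gcomp L (Gtens l1 l2 m1 \<phi>1 \<phi>2) \<psi>, x1, x2)"
  using assms unfolding tens_gen_def by blast

lemma tens_genI:
  assumes "0 < l1" "0 < l2" "0 < m1" "0 < m2"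
    "\<psi> \<in> Gset L (l1 + l2)" "\<phi>1 \<in> Gset l1 m1" "\<phi>2 \<in> Gset l2 m2"
    "x1 \<in> topspace (gsp D m1)" "x2 \<in> topspace (gsp E m2)"
  shows "tens_gen D E L ((l1, l2), \<psi>, gact D l1 m1 \<phi>1 x1, gact E l2 m2 \<phi>2 x2)
           ((m1, m2), Gcomp L (Gtens l1 l2 m1 \<phi>1 \<phi>2) \<psi>, x1, x2)"
  unfolding tens_gen_def using assms by blast

lemma tens_gen_tens_swap:
  assumes "tens_gen D E L r r'" "0 < L"
  shows "tens_gen E D L (tens_swap L r) (tens_swap L r')"
  using assms(1)
proof (cases rule: tens_genE)
  case (gen l1 l2 m1 m2 \<psi> \<phi>1 \<phi>2 x1 x2)
  interpret Gsplitting L l1 l2 \<psi>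
    using gen assms(2) by unfold_locales auto
  show ?thesis
    unfolding gen(10,11) tens_swap_simp Gswap_Gcomp_Gtens[OF gen(6,7,3,4)]
    using gen(1-4,6-9) Gswap_Gset by (intro tens_genI) simp_all
qed

lemma braid_tens_cls:
  assumes "0 < L"
  shows "braid D E L (tens_cls D E L r) = tens_cls E D L (tens_swap L r)"
  unfolding braid_def tens_cls_def
  by (rule the_elem_image_equivclp_class) (rule tens_gen_tens_swap[OF _ assms])

definition tens_rep_act ::
    "real \<Rightarrow> (real \<Rightarrow> real) \<Rightarrow> ((real \<times> real) \<times> (real \<Rightarrow> real) \<times> 'a \<times> 'b) \<Rightarrow>
     ((real \<times> real) \<times> (real \<Rightarrow> real) \<times> 'a \<times> 'b)" where
  "tens_rep_act L' \<omega> r = (case r of ((l1, l2), \<psi>, x1, x2) \<Rightarrow> ((l1, l2), Gcomp L' \<psi> \<omega>, x1, x2))"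

lemma tens_gen_tens_rep_act:
  assumes "tens_gen D E L r r'" "\<omega> \<in> Gset L' L" "0 < L" "0 < L'"
  shows "tens_gen D E L' (tens_rep_act L' \<omega> r) (tens_rep_act L' \<omega> r')"
  using assms(1)
proof (cases rule: tens_genE)
  case (gen l1 l2 m1 m2 \<psi> \<phi>1 \<phi>2 x1 x2)
  have "Gcomp L' \<psi> \<omega> \<in> Gset L' (l1 + l2)"
    using Gcomp_Gset[OF assms(2) gen(5)] gen assms by simp
  moreover have "Gcomp L' (Gcomp L (Gtens l1 l2 m1 \<phi>1 \<phi>2) \<psi>) \<omega>
      = Gcomp L' (Gtens l1 l2 m1 \<phi>1 \<phi>2) (Gcomp L' \<psi> \<omega>)"
    using Gset_range[OF assms(2,4,3)] by (rule Gcomp_assoc)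
  ultimately show ?thesis
    unfolding gen(10,11) tens_rep_act_def using gen(1-4,6-9) by (simp add: tens_genI)
qed

lemma tens_act_tens_cls:
  assumes "\<omega> \<in> Gset L' L" "0 < L" "0 < L'"
  shows "tens_act D E L' \<omega> (tens_cls D E L r) = tens_cls D E L' (tens_rep_act L' \<omega> r)"
proof -
  have "(\<lambda>((l1, l2), \<psi>, x1, x2). tens_cls D E L' ((l1, l2), Gcomp L' \<psi> \<omega>, x1, x2))
      = (\<lambda>r. tens_cls D E L' (tens_rep_act L' \<omega> r))"
    by (auto simp: tens_rep_act_def fun_eq_iff)
  then show ?thesis
    unfolding tens_act_def tens_cls_def
    by (simp only:) (rule the_elem_image_equivclp_class, rule tens_gen_tens_rep_act[OF _ assms])
qed

definition tens_split_pt :: "real \<Rightarrow> ((real \<times> real) \<times> (real \<Rightarrow> real) \<times> 'a \<times> 'b) \<Rightarrow> real" where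
  "tens_split_pt L r = Gsplit_pt L (fst (fst r)) (fst (snd r))"

lemma tens_split_pt_tens_cls:
  assumes "r' \<in> tens_cls D E L r" "0 < L"
  shows "tens_split_pt L r' = tens_split_pt L r"
proof -
  have inv: "tens_split_pt L a = tens_split_pt L b" if ab: "tens_gen D E L a b" for a b
    using ab
  proof (cases rule: tens_genE)
    case (gen l1 l2 m1 m2 \<psi> \<phi>1 \<phi>2 x1 x2)
    interpret Gsplitting L l1 l2 \<psi>
      using gen assms(2) by unfold_locales auto
    show ?thesis
      using Gsplit_pt_Gcomp_Gtens[OF gen(6,7,3,4)] gen(10,11) by (simp add: tens_split_pt_def s_def)
  qed
  have "equivclp (tens_gen D E L) r r'"
    using assms(1) unfolding tens_cls_def by simp
  then show ?thesis
    using equivclp_invariant[of "tens_gen D E L" r r' "tens_split_pt L"] inv by simp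
qed

lemma istopology_dgen:
  "istopology (\<lambda>U. U \<subseteq> topspace X \<and>
     (\<forall>n \<sigma>. continuous_map (simplex_top n) X \<sigma> \<longrightarrow>
        openin (simplex_top n) {t \<in> topspace (simplex_top n). \<sigma> t \<in> U}))"
proof -
  have "{t \<in> topspace Y. \<sigma> t \<in> S \<inter> T} = {t \<in> topspace Y. \<sigma> t \<in> S} \<inter> {t \<in> topspace Y. \<sigma> t \<in> T}"
    and "{t \<in> topspace Y. \<sigma> t \<in> \<Union>\<K>} = (\<Union>K\<in>\<K>. {t \<in> topspace Y. \<sigma> t \<in> K})"
    for Y :: "(nat \<Rightarrow> real) topology" and \<sigma> :: "(nat \<Rightarrow> real) \<Rightarrow> 'a" and S T \<K>
    by auto
  then show ?thesis
    unfolding istopology_def by (auto intro!: openin_Int openin_Union)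
qed

lemma openin_dgen:
  "openin (dgen X) U \<longleftrightarrow> U \<subseteq> topspace X \<and>
     (\<forall>n \<sigma>. continuous_map (simplex_top n) X \<sigma> \<longrightarrow>
        openin (simplex_top n) {t \<in> topspace (simplex_top n). \<sigma> t \<in> U})"
  unfolding dgen_def by (simp add: istopology_dgen)

lemma openin_imp_openin_dgen: "openin X U \<Longrightarrow> openin (dgen X) U"
  unfolding openin_dgen by (auto simp: openin_subset continuous_map_def)

lemma topspace_dgen [simp]: "topspace (dgen X) = topspace X"
  using openin_dgen[of X "topspace (dgen X)"] openin_imp_openin_dgen[of X "topspace X"]
  by (auto dest: openin_subset)

lemma continuous_map_dgen:
  assumes f: "continuous_map X Y f"
  shows "continuous_map (dgen X) (dgen Y) f"
  unfolding continuous_map_def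
proof (intro conjI allI impI)
  show "f \<in> topspace (dgen X) \<rightarrow> topspace (dgen Y)"
    using f by (auto simp: continuous_map_def)
  fix U assume U: "openin (dgen Y) U"
  show "openin (dgen X) {x \<in> topspace (dgen X). f x \<in> U}"
    unfolding openin_dgen
  proof (intro conjI allI impI)
    fix n \<sigma> assume \<sigma>: "continuous_map (simplex_top n) X \<sigma>"
    have "openin (simplex_top n) {t \<in> topspace (simplex_top n). (f \<circ> \<sigma>) t \<in> U}"
      using U continuous_map_compose[OF \<sigma> f] unfolding openin_dgen by blast
    moreover have "{t \<in> topspace (simplex_top n). \<sigma> t \<in> {x \<in> topspace (dgen X). f x \<in> U}}
        = {t \<in> topspace (simplex_top n). (f \<circ> \<sigma>) t \<in> U}"
      using \<sigma> by (auto simp: continuous_map_def)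
    ultimately show "openin (simplex_top n)
        {t \<in> topspace (simplex_top n). \<sigma> t \<in> {x \<in> topspace (dgen X). f x \<in> U}}"
      by simp
  qed auto
qed

lemma continuous_map_from_dgen: "continuous_map X Y f \<Longrightarrow> continuous_map (dgen X) Y f"
  unfolding continuous_map_def using openin_imp_openin_dgen by auto

lemma delta_generated_discrete_topology: "delta_generated (discrete_topology U)"
  unfolding delta_generated_def topology_eq
  using openin_dgen[of "discrete_topology U"] openin_imp_openin_dgen[of "discrete_topology U"]
  by auto

lemma topspace_dprod [simp]: "topspace (dprod X Y) = topspace X \<times> topspace Y"
  by (simp add: dprod_def)

lemma continuous_map_dprod:
  assumes "continuous_map X X' f" "continuous_map Y Y' g"
  shows "continuous_map (dprod X Y) (dprod X' Y') (\<lambda>(x, y). (f x, g y))"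
  unfolding dprod_def using assms by (intro continuous_map_dgen) (simp add: continuous_map_prod_top)

lemma continuous_map_dprod_swap: "continuous_map (dprod X Y) (dprod Y X) (\<lambda>(x, y). (y, x))"
  unfolding dprod_def
  by (intro continuous_map_dgen homeomorphic_imp_continuous_map[OF homeomorphic_map_swap])

lemma istopology_quotient:
  "istopology (\<lambda>U. U \<subseteq> q ` topspace X \<and> openin X {x \<in> topspace X. q x \<in> U})"
proof -
  have "{x \<in> topspace X. q x \<in> S \<inter> T} = {x \<in> topspace X. q x \<in> S} \<inter> {x \<in> topspace X. q x \<in> T}"
    and "{x \<in> topspace X. q x \<in> \<Union>\<K>} = (\<Union>K\<in>\<K>. {x \<in> topspace X. q x \<in> K})"
    for S T \<K>
    by auto
  then show ?thesis
    unfolding istopology_def by (auto intro!: openin_Int openin_Union)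
qed

lemma openin_quotient_topology:
  "openin (quotient_topology X q) U \<longleftrightarrow> U \<subseteq> q ` topspace X \<and> openin X {x \<in> topspace X. q x \<in> U}"
  unfolding quotient_topology_def by (simp add: istopology_quotient)

lemma topspace_quotient_topology [simp]: "topspace (quotient_topology X q) = q ` topspace X"
proof -
  have "{x \<in> topspace X. q x \<in> q ` topspace X} = topspace X"
    by auto
  then have "openin (quotient_topology X q) (q ` topspace X)"
    unfolding openin_quotient_topology by simp
  then show ?thesis
    using openin_quotient_topology[of X q "topspace (quotient_topology X q)"]
    by (auto dest: openin_subset)
qed

lemma continuous_map_quotient_topology: "continuous_map X (quotient_topology X q) q"
  unfolding continuous_map_def openin_quotient_topology by auto

lemma continuous_map_from_quotient_topology:
  assumes "continuous_map X Y (g \<circ> q)"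
  shows "continuous_map (quotient_topology X q) Y g"
  unfolding continuous_map_def
proof (intro conjI allI impI)
  show "g \<in> topspace (quotient_topology X q) \<rightarrow> topspace Y"
    using assms by (auto simp: continuous_map_def)
  fix U assume "openin Y U"
  moreover have "{x \<in> topspace X. q x \<in> {y \<in> topspace (quotient_topology X q). g y \<in> U}}
      = {x \<in> topspace X. (g \<circ> q) x \<in> U}"
    by auto
  ultimately show "openin (quotient_topology X q) {y \<in> topspace (quotient_topology X q). g y \<in> U}"
    unfolding openin_quotient_topology using assms by (auto simp: continuous_map_def)
qed

lemma continuous_map_sum_topology_fibrewise:
  assumes "\<And>i. i \<in> I \<Longrightarrow> k i \<in> J"
    and "\<And>i. i \<in> I \<Longrightarrow> continuous_map (X i) (Y (k i)) (h i)"
  shows "continuous_map (sum_topology X I) (sum_topology Y J) (\<lambda>(i, x). (k i, h i x))"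
  unfolding continuous_map_def
proof (intro conjI allI impI)
  show "(\<lambda>(i, x). (k i, h i x)) \<in> topspace (sum_topology X I) \<rightarrow> topspace (sum_topology Y J)"
    using assms by (force simp: continuous_map_def)
  fix U assume U: "openin (sum_topology Y J) U"
  show "openin (sum_topology X I) {z \<in> topspace (sum_topology X I). (case z of (i, x) \<Rightarrow> (k i, h i x)) \<in> U}"
    unfolding openin_sum_topology
  proof (intro conjI ballI)
    fix i assume i: "i \<in> I"
    have "openin (X i) {x \<in> topspace (X i). h i x \<in> {y. (k i, y) \<in> U}}"
      using U assms[OF i] unfolding openin_sum_topology continuous_map_def by blast
    then show "openin (X i) {x. (i, x) \<in> {z \<in> topspace (sum_topology X I). (case z of (i, x) \<Rightarrow> (k i, h i x)) \<in> U}}"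
      using i by (simp add: conj_commute)
  qed auto
qed

section \<open>The compact-open topology on \<open>\<G>(a, b)\<close> is the uniform one\<close>

definition compact_open :: "real \<Rightarrow> (real \<Rightarrow> real) topology" where
  "compact_open a =
     topology_generated_by {{f. f ` K \<subseteq> U} | K U. compact K \<and> K \<subseteq> {0..a} \<and> open U}"

lemma Gtop_eq: "Gtop a b = dgen (subtopology (compact_open a) (Gset a b))"
  by (simp add: Gtop_def compact_open_def)

lemma topspace_compact_open [simp]: "topspace (compact_open a) = UNIV"
proof -
  have "UNIV \<in> {{f::real \<Rightarrow> real. f ` K \<subseteq> U} | K U. compact K \<and> K \<subseteq> {0..a} \<and> open U}"
    by (rule CollectI, rule exI[of _ "{}"], rule exI[of _ UNIV]) auto
  then show ?thesis
    unfolding compact_open_def by auto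
qed

lemma topspace_Gtop [simp]: "topspace (Gtop a b) = Gset a b"
  by (simp add: Gtop_eq)

definition unif_close :: "real \<Rightarrow> (real \<Rightarrow> real) \<Rightarrow> (real \<Rightarrow> real) \<Rightarrow> real \<Rightarrow> bool" where
  "unif_close a g f e \<longleftrightarrow> (\<forall>t\<in>{0..a}. \<bar>g t - f t\<bar> < e)"

lemma unif_close_mono: "unif_close a g f e \<Longrightarrow> e \<le> e' \<Longrightarrow> unif_close a g f e'"
  by (auto simp: unif_close_def)

lemma compact_open_subbasic_unif_nbhd:
  assumes f0: "continuous_on {0..a} f0" and K: "compact K" "K \<subseteq> {0..a}" and U: "open U"
    and f0K: "f0 ` K \<subseteq> U"
  shows "\<exists>e>0. \<forall>g. unif_close a g f0 e \<longrightarrow> g ` K \<subseteq> U"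
proof (cases "K = {}")
  case False
  have "compact (f0 ` K)"
    using compact_continuous_image[OF continuous_on_subset[OF f0 K(2)] K(1)] .
  then obtain d where d: "d > 0" "\<forall>x\<in>f0 ` K. \<forall>y\<in>- U. d \<le> dist x y"
    using separate_compact_closed[of "f0 ` K" "- U"] U f0K by auto
  have "g ` K \<subseteq> U" if "unif_close a g f0 d" for g
  proof
    fix y assume "y \<in> g ` K"
    then obtain t where t: "t \<in> K" "y = g t" by auto
    then have "dist (f0 t) (g t) < d"
      using that K(2) by (auto simp: unif_close_def dist_real_def abs_minus_commute)
    then show "y \<in> U"
      using d t by force
  qed
  with d(1) show ?thesis by blast
qed (use zero_less_one in blast)

lemma openin_compact_open_unif_nbhd:
  assumes W: "openin (subtopology (compact_open a) S) W" and f0: "f0 \<in> W" "continuous_on {0..a} f0"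
  shows "\<exists>e>0. \<forall>g\<in>S. unif_close a g f0 e \<longrightarrow> g \<in> W"
proof -
  obtain W' where W': "openin (compact_open a) W'" "W = W' \<inter> S"
    using W by (auto simp: openin_subtopology)
  have "generate_topology_on {{f. f ` K \<subseteq> U} | K U. compact K \<and> K \<subseteq> {0..a} \<and> open U} W'"
    using W'(1) unfolding compact_open_def by (rule openin_topology_generated_by)
  then have "\<exists>e>0. \<forall>g. unif_close a g f0 e \<longrightarrow> g \<in> W'" if "f0 \<in> W'"
    using that
  proof (induction rule: generate_topology_on.induct)
    case (Int A B)
    then obtain e1 e2 where "e1 > 0" "\<And>g. unif_close a g f0 e1 \<Longrightarrow> g \<in> A"
      "e2 > 0" "\<And>g. unif_close a g f0 e2 \<Longrightarrow> g \<in> B"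
      by blast
    moreover have "unif_close a g f0 e1" "unif_close a g f0 e2"
      if "unif_close a g f0 (min e1 e2)" for g
      using that unif_close_mono by auto
    ultimately show ?case
      by (intro exI[of _ "min e1 e2"]) auto
  next
    case (UN \<K>)
    then show ?case
      by blast
  next
    case (Basis s)
    then obtain K U where "s = {f. f ` K \<subseteq> U}" "compact K" "K \<subseteq> {0..a}" "open U"
      by blast
    then show ?case
      using compact_open_subbasic_unif_nbhd[OF f0(2), of K U] Basis.prems by simp
  qed simp
  then show ?thesis
    using f0 W' by blast
qed

lemma continuous_on_interval_grid:
  fixes f :: "real \<Rightarrow> real"
  assumes f: "continuous_on {0..a} f" and a: "0 < a" and e: "0 < e"
  obtains T where "finite T" "T \<subseteq> {0..a}"
    "\<And>t. t \<in> {0..a} \<Longrightarrow> \<exists>p\<in>T. \<exists>q\<in>T. p \<le> t \<and> t \<le> q \<and> \<bar>f q - f p\<bar> < e"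
proof -
  obtain d where d: "d > 0" "\<forall>x\<in>{0..a}. \<forall>x'\<in>{0..a}. dist x' x < d \<longrightarrow> dist (f x') (f x) < e"
    using compact_uniformly_continuous[OF f compact_Icc] e unfolding uniformly_continuous_on_def by blast
  obtain n :: nat where n: "a / d < real n"
    using reals_Archimedean2 by blast
  have n_pos: "0 < real n"
    using n a d by (smt (verit) divide_pos_pos)
  have step: "a / real n < d"
    using n n_pos d by (simp add: field_simps)
  define grid where "grid i = a * real i / real n" for i :: nat
  define T where "T = grid ` {..n}"
  have T: "T \<subseteq> {0..a}"
    unfolding T_def grid_def using a n_pos by (auto simp: field_simps)
  have "\<exists>p\<in>T. \<exists>q\<in>T. p \<le> t \<and> t \<le> q \<and> \<bar>f q - f p\<bar> < e" if t: "t \<in> {0..a}" for t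
  proof (cases "t = a")
    case True
    have "a \<in> T"
      unfolding T_def grid_def using n_pos by (auto intro!: image_eqI[of _ _ n])
    with True e show ?thesis
      by (intro bexI[of _ a]) auto
  next
    case False
    define i where "i = nat \<lfloor>t * real n / a\<rfloor>"
    have "real i = of_int \<lfloor>t * real n / a\<rfloor>"
      using t a n_pos unfolding i_def by simp
    then have i: "real i \<le> t * real n / a" "t * real n / a < real i + 1"
      by linarith+
    moreover have "t * real n / a < real n"
      using t False a n_pos by (simp add: field_simps)
    ultimately have "i < n"
      by linarith
    then have grid_T: "grid i \<in> T" "grid (Suc i) \<in> T"
      unfolding T_def by auto
    have "grid i \<le> t" "t \<le> grid (Suc i)"
      using i a n_pos unfolding grid_def by (simp_all add: field_simps)
    moreover have "dist (grid (Suc i)) (grid i) < d"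
      using step a by (simp add: grid_def dist_real_def add_divide_distrib ring_distribs)
    then have "\<bar>f (grid (Suc i)) - f (grid i)\<bar> < e"
      using d(2) grid_T T by (auto simp: dist_real_def)
    ultimately show ?thesis
      using grid_T by blast
  qed
  with T show ?thesis
    using that unfolding T_def by blast
qed

text \<open>By monotonicity, closeness at finitely many grid points controls closeness everywhere.\<close>
lemma Gset_unif_nbhd_contains_open:
  assumes f0: "f0 \<in> Gset a b" and a: "0 < a" and b: "0 < b" and e: "0 < e"
  obtains N where "openin (compact_open a) N" "f0 \<in> N" "\<And>g. g \<in> N \<inter> Gset a b \<Longrightarrow> unif_close a g f0 e"
proof -
  obtain T where T: "finite T" "T \<subseteq> {0..a}"
    "\<And>t. t \<in> {0..a} \<Longrightarrow> \<exists>p\<in>T. \<exists>q\<in>T. p \<le> t \<and> t \<le> q \<and> \<bar>f0 q - f0 p\<bar> < e / 2"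
    using continuous_on_interval_grid[OF GsetD(2)[OF f0 a b] a, of "e/2"] e by auto
  define N where "N = (\<Inter>p\<in>T. {f. f ` {p} \<subseteq> ball (f0 p) (e/2)})"
  have "openin (compact_open a) {f. f ` {p} \<subseteq> ball (f0 p) (e/2)}" if "p \<in> T" for p
    unfolding compact_open_def openin_topology_generated_by_iff
    by (rule generate_topology_on.Basis, rule CollectI, rule exI[of _ "{p}"],
        rule exI[of _ "ball (f0 p) (e/2)"]) (use that T(2) in auto)
  then have "openin (compact_open a) (N \<inter> topspace (compact_open a))"
    unfolding N_def using T(1) by (intro openin_INT)
  then have "openin (compact_open a) N"
    by simp
  moreover have "f0 \<in> N"
    unfolding N_def using e by auto
  moreover have "unif_close a g f0 e" if g: "g \<in> N \<inter> Gset a b" for g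
    unfolding unif_close_def
  proof
    fix t assume t: "t \<in> {0..a}"
    then obtain p q where pq: "p \<in> T" "q \<in> T" "p \<le> t" "t \<le> q" "\<bar>f0 q - f0 p\<bar> < e / 2"
      using T(3) by blast
    then have "p \<in> {0..a}" "q \<in> {0..a}"
      using T(2) by auto
    then have "g p \<le> g t" "g t \<le> g q" "f0 p \<le> f0 t" "f0 t \<le> f0 q"
      using Gset_le_iff[of g a b] Gset_le_iff[OF f0 a b] g pq t a b by auto
    moreover have "\<bar>g p - f0 p\<bar> < e/2" "\<bar>g q - f0 q\<bar> < e/2"
      using g pq(1,2) unfolding N_def by (auto simp: dist_real_def abs_minus_commute)
    ultimately show "\<bar>g t - f0 t\<bar> < e"
      using pq(5) by linarith
  qed
  ultimately show ?thesis
    using that by blast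
qed

lemma openin_Gset_if_unif_nbhds:
  assumes a: "0 < a" and b: "0 < b" and W: "W \<subseteq> Gset a b"
    and nbhd: "\<And>f0. f0 \<in> W \<Longrightarrow> \<exists>e>0. \<forall>g\<in>Gset a b. unif_close a g f0 e \<longrightarrow> g \<in> W"
  shows "openin (subtopology (compact_open a) (Gset a b)) W"
proof -
  have "\<exists>N. openin (compact_open a) N \<and> f0 \<in> N \<and> N \<inter> Gset a b \<subseteq> W" if f0: "f0 \<in> W" for f0
  proof -
    obtain e where "e > 0" "\<forall>g\<in>Gset a b. unif_close a g f0 e \<longrightarrow> g \<in> W"
      using nbhd[OF f0] by blast
    moreover obtain N where "openin (compact_open a) N" "f0 \<in> N"
      "\<And>g. g \<in> N \<inter> Gset a b \<Longrightarrow> unif_close a g f0 e"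
      using Gset_unif_nbhd_contains_open[of f0 a b e] f0 W a b \<open>e > 0\<close> by blast
    ultimately show ?thesis
      by blast
  qed
  then obtain N where N: "\<And>f0. f0 \<in> W \<Longrightarrow> openin (compact_open a) (N f0) \<and> f0 \<in> N f0 \<and> N f0 \<inter> Gset a b \<subseteq> W"
    by metis
  have "openin (compact_open a) (\<Union>(N ` W))"
    using N by (auto intro!: openin_Union)
  moreover have "W = \<Union>(N ` W) \<inter> Gset a b"
    using N W by blast
  ultimately show ?thesis
    unfolding openin_subtopology by blast
qed

section \<open>Continuity of the swap\<close>

lemma Gsplit_pt_unif_continuous:
  assumes f0: "f0 \<in> Gset L b" and pos: "0 < L" "0 < b" and c: "0 < c" "c < b" and \<eta>: "0 < \<eta>"
  shows "\<exists>e>0. \<forall>g\<in>Gset L b. unif_close L g f0 e \<longrightarrow> \<bar>Gsplit_pt L c g - Gsplit_pt L c f0\<bar> < \<eta>"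
proof -
  define s0 where "s0 = Gsplit_pt L c f0"
  have "s0 \<in> {0..L}" "f0 s0 = c"
    using Gsplit_pt[OF f0 pos] c unfolding s0_def by auto
  moreover have "f0 0 = 0" "f0 L = b"
    using GsetD[OF f0 pos] by simp_all
  ultimately have s0: "0 < s0" "s0 < L" "f0 s0 = c"
    using c by (auto simp: less_le)
  define \<delta> where "\<delta> = min \<eta> (min s0 (L - s0)) / 2"
  have \<delta>: "0 < \<delta>" "\<delta> < \<eta>" "\<delta> < s0" "\<delta> < L - s0"
    using s0 \<eta> unfolding \<delta>_def by auto
  have pq: "s0 - \<delta> \<in> {0..L}" "s0 + \<delta> \<in> {0..L}"
    using \<delta> s0 by auto
  have "f0 (s0 - \<delta>) < c" "c < f0 (s0 + \<delta>)"
    using Gset_less_iff[OF f0 pos pq(1), of s0] Gset_less_iff[OF f0 pos _ pq(2), of s0] s0 \<delta> by auto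
  then have e: "0 < min (c - f0 (s0 - \<delta>)) (f0 (s0 + \<delta>) - c)"
    by simp
  have "\<bar>Gsplit_pt L c g - s0\<bar> < \<eta>"
    if g: "g \<in> Gset L b" "unif_close L g f0 (min (c - f0 (s0 - \<delta>)) (f0 (s0 + \<delta>) - c))" for g
  proof -
    define s where "s = Gsplit_pt L c g"
    have s: "s \<in> {0..L}" "g s = c"
      using Gsplit_pt[OF g(1) pos] c unfolding s_def by auto
    have "\<bar>g (s0 - \<delta>) - f0 (s0 - \<delta>)\<bar> < c - f0 (s0 - \<delta>)"
      "\<bar>g (s0 + \<delta>) - f0 (s0 + \<delta>)\<bar> < f0 (s0 + \<delta>) - c"
      using g(2) pq unfolding unif_close_def by fastforce+
    then have "g (s0 - \<delta>) < g s" "g s < g (s0 + \<delta>)"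
      using s(2) by linarith+
    then have "s0 - \<delta> < s" "s < s0 + \<delta>"
      using Gset_less_iff[OF g(1) pos pq(1) s(1)] Gset_less_iff[OF g(1) pos s(1) pq(2)] by simp_all
    then show ?thesis
      using \<delta> unfolding s_def[symmetric] by auto
  qed
  with e show ?thesis
    unfolding s0_def by blast
qed

lemma unif_close_Gtens_self:
  assumes "unif_close L g f e" "u \<in> {0..L+L}"
  shows "\<bar>Gtens L L B g g u - Gtens L L B f f u\<bar> < e"
  using assms by (auto simp: Gtens_apply unif_close_def)

lemma (in Gsplitting) Gswap_unif_continuous:
  assumes d: "0 < d"
  shows "\<exists>e>0. \<forall>g\<in>Gset L (l1 + l2). unif_close L g \<psi> e \<longrightarrow>
           unif_close L (Gswap L l1 l2 g) (Gswap L l1 l2 \<psi>) d"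
proof -
  let ?\<psi>\<psi> = "Gtens L L (l1 + l2) \<psi> \<psi>"
  have "continuous_on {0..L+L} ?\<psi>\<psi>"
    using GsetD(2)[OF Gtens_Gset[OF \<psi> \<psi>]] pos by simp
  then have "uniformly_continuous_on {0..L+L} ?\<psi>\<psi>"
    by (rule compact_uniformly_continuous) simp
  then obtain \<eta> where \<eta>: "\<eta> > 0"
    "\<forall>x\<in>{0..L+L}. \<forall>x'\<in>{0..L+L}. dist x' x < \<eta> \<longrightarrow> dist (?\<psi>\<psi> x') (?\<psi>\<psi> x) < d/2"
    unfolding uniformly_continuous_on_def using d by (meson half_gt_zero)
  obtain e where e: "e > 0"
    "\<forall>g\<in>Gset L (l1 + l2). unif_close L g \<psi> e \<longrightarrow> \<bar>Gsplit_pt L l1 g - s\<bar> < \<eta>"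
    using Gsplit_pt_unif_continuous[OF \<psi> pos(1) sum_pos pos(2) _ \<eta>(1)] pos(3)
    unfolding s_def by auto
  have "unif_close L (Gswap L l1 l2 g) (Gswap L l1 l2 \<psi>) d"
    if g: "g \<in> Gset L (l1 + l2)" "unif_close L g \<psi> (min e (d/2))" for g
    unfolding unif_close_def
  proof
    fix t assume t: "t \<in> {0..L}"
    interpret g: Gsplitting L l1 l2 g
      using g(1) pos by unfold_locales
    have u: "t + g.s \<in> {0..L+L}" "t + s \<in> {0..L+L}"
      using t g.s s by auto
    have close: "unif_close L g \<psi> e" "unif_close L g \<psi> (d/2)"
      using unif_close_mono[OF g(2)] by simp_all
    have "\<bar>Gtens L L (l1 + l2) g g (t + g.s) - ?\<psi>\<psi> (t + g.s)\<bar> < d/2"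
      using unif_close_Gtens_self[OF close(2) u(1)] .
    moreover have "\<bar>g.s - s\<bar> < \<eta>"
      using e(2) g(1) close(1) unfolding g.s_def by blast
    then have "\<bar>?\<psi>\<psi> (t + g.s) - ?\<psi>\<psi> (t + s)\<bar> < d/2"
      using \<eta>(2) u by (auto simp: dist_real_def)
    ultimately show "\<bar>Gswap L l1 l2 g t - Gswap L l1 l2 \<psi> t\<bar> < d"
      using g.Gswap_as_shift[OF t] Gswap_as_shift[OF t] by linarith
  qed
  moreover have "0 < min e (d/2)"
    using e d by simp
  ultimately show ?thesis
    by blast
qed

lemma continuous_map_Gswap:
  assumes pos: "0 < L" "0 < l1" "0 < l2"
  shows "continuous_map (Gtop L (l1 + l2)) (Gtop L (l2 + l1)) (Gswap L l1 l2)"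
  unfolding Gtop_eq
proof (rule continuous_map_dgen)
  have swap_Gset: "Gswap L l1 l2 \<psi> \<in> Gset L (l2 + l1)" if "\<psi> \<in> Gset L (l1 + l2)" for \<psi>
    using Gsplitting.Gswap_Gset[of L l1 l2 \<psi>] that pos by (simp add: Gsplitting_def)
  show "continuous_map (subtopology (compact_open L) (Gset L (l1 + l2)))
      (subtopology (compact_open L) (Gset L (l2 + l1))) (Gswap L l1 l2)"
    unfolding continuous_map_def
  proof (intro conjI allI impI)
    show "Gswap L l1 l2 \<in> topspace (subtopology (compact_open L) (Gset L (l1 + l2)))
        \<rightarrow> topspace (subtopology (compact_open L) (Gset L (l2 + l1)))"
      using swap_Gset by simp
    fix U assume U: "openin (subtopology (compact_open L) (Gset L (l2 + l1))) U"
    have "openin (subtopology (compact_open L) (Gset L (l1 + l2))) {\<psi> \<in> Gset L (l1 + l2). Gswap L l1 l2 \<psi> \<in> U}"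
    proof (rule openin_Gset_if_unif_nbhds)
      fix \<psi> assume \<psi>U: "\<psi> \<in> {\<psi> \<in> Gset L (l1 + l2). Gswap L l1 l2 \<psi> \<in> U}"
      interpret Gsplitting L l1 l2 \<psi>
        using \<psi>U pos by unfold_locales auto
      have "Gswap L l1 l2 \<psi> \<in> U"
        using \<psi>U by simp
      then obtain d where d: "d > 0"
        "\<forall>g\<in>Gset L (l2 + l1). unif_close L g (Gswap L l1 l2 \<psi>) d \<longrightarrow> g \<in> U"
        using openin_compact_open_unif_nbhd[OF U _ GsetD(2)[OF Gswap_Gset]] pos by auto
      obtain e where "e > 0" "\<forall>g\<in>Gset L (l1 + l2). unif_close L g \<psi> e \<longrightarrow>
          unif_close L (Gswap L l1 l2 g) (Gswap L l1 l2 \<psi>) d"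
        using Gswap_unif_continuous[OF d(1)] by blast
      then show "\<exists>e>0. \<forall>g\<in>Gset L (l1 + l2). unif_close L g \<psi> e \<longrightarrow>
          g \<in> {\<psi> \<in> Gset L (l1 + l2). Gswap L l1 l2 \<psi> \<in> U}"
        using d(2) swap_Gset by blast
    qed (use pos in auto)
    then show "openin (subtopology (compact_open L) (Gset L (l1 + l2)))
        {\<psi> \<in> topspace (subtopology (compact_open L) (Gset L (l1 + l2))). Gswap L l1 l2 \<psi> \<in> U}"
      by simp
  qed
qed

lemma tens_swap_eq_fibrewise:
  "tens_swap L = (\<lambda>(i, z). (prod.swap i,
      (case i of (l1, l2) \<Rightarrow> \<lambda>(\<psi>, x). (Gswap L l1 l2 \<psi>, prod.swap x)) z))"
  by (auto simp: fun_eq_iff tens_swap_simp)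

lemma continuous_map_tens_swap:
  assumes "0 < L"
  shows "continuous_map (tens_sum D E L) (tens_sum E D L) (tens_swap L)"
  unfolding tens_swap_eq_fibrewise tens_sum_def
proof (rule continuous_map_sum_topology_fibrewise)
  fix i assume "i \<in> tens_index"
  then obtain l1 l2 where i: "i = (l1, l2)" "0 < l1" "0 < l2"
    by (cases i) (auto simp: tens_index_def)
  have "continuous_map (dprod (Gtop L (l1 + l2)) (dprod (gsp D l1) (gsp E l2)))
      (dprod (Gtop L (l2 + l1)) (dprod (gsp E l2) (gsp D l1)))
      (\<lambda>(\<psi>, x). (Gswap L l1 l2 \<psi>, (\<lambda>(x1, x2). (x2, x1)) x))"
    using continuous_map_Gswap[OF assms i(2,3)] continuous_map_dprod_swap
    by (rule continuous_map_dprod)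
  then show "continuous_map ((\<lambda>(l1, l2). dprod (Gtop L (l1 + l2)) (dprod (gsp D l1) (gsp E l2))) i)
      ((\<lambda>(l1, l2). dprod (Gtop L (l1 + l2)) (dprod (gsp E l1) (gsp D l2))) (prod.swap i))
      (case i of (l1, l2) \<Rightarrow> \<lambda>(\<psi>, x). (Gswap L l1 l2 \<psi>, prod.swap x))"
    by (simp add: i prod.swap_def case_prod_unfold)
qed (auto simp: tens_index_def)

lemma tens_swap_tens_swap:
  assumes "0 < L" "r \<in> topspace (tens_sum D E L)"
  shows "tens_swap L (tens_swap L r) = r"
proof -
  obtain l1 l2 \<psi> x1 x2 where r: "r = ((l1, l2), \<psi>, x1, x2)"
    by (metis prod.collapse)
  interpret Gsplitting L l1 l2 \<psi>
    using assms unfolding r tens_sum_def by unfold_locales (auto simp: tens_index_def)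
  show ?thesis
    unfolding r by (simp add: tens_swap_simp Gswap_Gswap)
qed

lemma continuous_map_braid:
  assumes "0 < L"
  shows "continuous_map (tens_top D E L) (tens_top E D L) (braid D E L)"
  unfolding tens_top_def
proof (rule continuous_map_from_quotient_topology)
  have "braid D E L \<circ> tens_cls D E L = tens_cls E D L \<circ> tens_swap L"
    by (simp add: fun_eq_iff braid_tens_cls[OF assms])
  then show "continuous_map (tens_sum D E L) (quotient_topology (tens_sum E D L) (tens_cls E D L))
      (braid D E L \<circ> tens_cls D E L)"
    using continuous_map_compose[OF continuous_map_tens_swap[OF assms] continuous_map_quotient_topology]
    by simp
qed

lemma braid_braid:
  assumes L: "0 < L" and c: "c \<in> topspace (tens_top D E L)"
  shows "braid E D L (braid D E L c) = c"
proof -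
  obtain r where "c = tens_cls D E L r" "r \<in> topspace (tens_sum D E L)"
    using c unfolding tens_top_def topspace_quotient_topology by (rule imageE)
  then show ?thesis
    by (simp add: braid_tens_cls[OF L] tens_swap_tens_swap[OF L])
qed

lemma homeomorphic_map_braid:
  assumes L: "0 < L"
  shows "homeomorphic_map (tens_top D E L) (tens_top E D L) (braid D E L)"
proof -
  have "homeomorphic_maps (tens_top D E L) (tens_top E D L) (braid D E L) (braid E D L)"
    unfolding homeomorphic_maps_def
    using continuous_map_braid[OF L, where D = D and E = E] continuous_map_braid[OF L, where D = E and E = D]
      braid_braid[OF L, where D = D and E = E] braid_braid[OF L, where D = E and E = D]
    by blast
  then show ?thesis
    by (rule homeomorphic_maps_imp_map)
qed

section \<open>Failure of naturality\<close>

text \<open>\<open>Gsplit_pt L' c \<omega>\<close> is \<open>\<omega>\<^sup>-\<^sup>1(c)\<close>, so naturality would force \<open>\<omega>\<^sup>-\<^sup>1\<close> to intertwine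
  the reflections \<open>t \<mapsto> L - t\<close> and \<open>t \<mapsto> L' - t\<close>.\<close>
lemma braid_natural_split_pt:
  assumes nat: "braid_natural D E" and r: "((l1, l2), \<psi>, x1, x2) \<in> topspace (tens_sum D E L)"
    and \<omega>: "\<omega> \<in> Gset L' L" and L: "0 < L" "0 < L'"
  shows "L' - Gsplit_pt L' (Gsplit_pt L l1 \<psi>) \<omega> = Gsplit_pt L' (L - Gsplit_pt L l1 \<psi>) \<omega>"
proof -
  let ?r = "((l1, l2), \<psi>, x1, x2)"
  interpret Gsplitting L l1 l2 \<psi>
    using r L unfolding tens_sum_def by unfold_locales (auto simp: tens_index_def)
  interpret \<psi>\<omega>: Gsplitting L' l1 l2 "Gcomp L' \<psi> \<omega>"
    using Gcomp_Gset[OF \<omega> \<psi> L(2,1) sum_pos] L pos by unfold_locales auto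
  have "tens_cls D E L ?r \<in> topspace (tens_top D E L)"
    using r unfolding tens_top_def by simp
  then have "braid D E L' (tens_act D E L' \<omega> (tens_cls D E L ?r))
      = tens_act E D L' \<omega> (braid D E L (tens_cls D E L ?r))"
    using nat \<omega> L unfolding braid_natural_def by blast
  then have "tens_cls E D L' (tens_swap L' (tens_rep_act L' \<omega> ?r))
      = tens_cls E D L' (tens_rep_act L' \<omega> (tens_swap L ?r))"
    by (simp only: tens_act_tens_cls[OF \<omega> L] braid_tens_cls L)
  then have "tens_rep_act L' \<omega> (tens_swap L ?r) \<in> tens_cls E D L' (tens_swap L' (tens_rep_act L' \<omega> ?r))"
    by (simp add: tens_cls_def)
  then have "tens_split_pt L' (tens_swap L' (tens_rep_act L' \<omega> ?r))
      = tens_split_pt L' (tens_rep_act L' \<omega> (tens_swap L ?r))"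
    using tens_split_pt_tens_cls L(2) by metis
  moreover have "tens_split_pt L' (tens_swap L' (tens_rep_act L' \<omega> ?r)) = L' - Gsplit_pt L' s \<omega>"
    using \<psi>\<omega>.Gsplit_pt_Gswap Gsplit_pt_Gcomp[OF \<psi> \<omega> L(2,1) sum_pos] pos
    by (simp add: tens_split_pt_def tens_rep_act_def tens_swap_simp \<psi>\<omega>.s_def s_def)
  moreover have "tens_split_pt L' (tens_rep_act L' \<omega> (tens_swap L ?r)) = Gsplit_pt L' (L - s) \<omega>"
    using Gsplit_pt_Gcomp[OF Gswap_Gset \<omega> L(2,1)] Gsplit_pt_Gswap pos
    by (simp add: tens_split_pt_def tens_rep_act_def tens_swap_simp)
  ultimately show ?thesis
    by (simp add: s_def)
qed

definition point_gspace :: "'a \<Rightarrow> 'a gspace" where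
  "point_gspace a = \<lparr>gsp = (\<lambda>l. discrete_topology {a}), gact = (\<lambda>l1 l2 \<phi> x. x)\<rparr>"

lemma G_space_point_gspace: "G_space (point_gspace a)"
proof -
  have "continuous_map (dprod (Gtop l1 l2) (discrete_topology {a})) (discrete_topology {a}) snd"
    for l1 l2
    unfolding dprod_def by (intro continuous_map_from_dgen continuous_map_snd)
  then show ?thesis
    unfolding G_space_def point_gspace_def
    by (simp add: delta_generated_discrete_topology case_prod_unfold)
qed

definition half_square :: "real \<Rightarrow> real" where
  "half_square = restrict (\<lambda>t. t * t / 2) {0..2}"

lemma half_square_Gset: "half_square \<in> Gset 2 2"
proof -
  have "continuous_on {0..2} half_square"
    by (rule continuous_on_cong[THEN iffD1, OF refl _ continuous_on_subset[of UNIV "\<lambda>t::real. t * t / 2"]])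
       (auto simp: half_square_def intro!: continuous_intros)
  moreover have "strict_mono_on {0..2} half_square"
    unfolding strict_mono_on_def half_square_def
    by (auto intro!: divide_strict_right_mono mult_strict_mono)
  ultimately show ?thesis
    by (simp add: Gset_iff half_square_def)
qed

lemma Gsplit_pt_half_square: "Gsplit_pt 2 1 half_square = sqrt 2"
proof (rule Gsplit_pt_eqI[OF half_square_Gset])
  have "sqrt 2 \<le> (2::real)"
    by (smt (verit) real_sqrt_le_iff real_sqrt_four)
  then show "sqrt 2 \<in> {0..2::real}"
    by simp
  then show "half_square (sqrt 2) = 1"
    by (simp add: half_square_def)
qed simp_all

lemma not_braid_natural_point_gspace: "\<not> braid_natural (point_gspace a) (point_gspace b)"
proof
  assume nat: "braid_natural (point_gspace a) (point_gspace b)"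
  have id: "Gid 2 \<in> Gset 2 (1 + 1)"
    using Gid_Gset[of 2] by simp
  have "((1, 1), Gid 2, a, b) \<in> topspace (tens_sum (point_gspace a) (point_gspace b) 2)"
    using id by (simp add: tens_sum_def tens_index_def point_gspace_def)
  then have "2 - Gsplit_pt 2 (Gsplit_pt 2 1 (Gid 2)) half_square
      = Gsplit_pt 2 (2 - Gsplit_pt 2 1 (Gid 2)) half_square"
    by (rule braid_natural_split_pt[OF nat _ half_square_Gset]) simp_all
  moreover have "Gsplit_pt 2 1 (Gid 2) = 1"
    by (rule Gsplit_pt_eqI[OF id]) (simp_all add: Gid_def)
  ultimately have "2 - sqrt 2 = sqrt (2::real)"
    by (simp add: Gsplit_pt_half_square)
  then show False
    by simp
qed

theorem theorem4p9:
  fixes D :: "'a gspace" and E :: "'b gspace" and L :: real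
  assumes "G_space D" and "G_space E" and "0 < L"
  shows "(\<forall>r\<in>topspace (tens_sum D E L).
             braid D E L (tens_cls D E L r) = tens_cls E D L (tens_swap L r))
       \<and> homeomorphic_map (tens_top D E L) (tens_top E D L) (braid D E L)
       \<and> (\<exists>(D'::'a gspace) (E'::'b gspace). G_space D' \<and> G_space E' \<and> \<not> braid_natural D' E')"
proof -
  have "G_space (point_gspace (undefined :: 'a))" "G_space (point_gspace (undefined :: 'b))"
    "\<not> braid_natural (point_gspace (undefined :: 'a)) (point_gspace (undefined :: 'b))"
    by (simp_all only: G_space_point_gspace not_braid_natural_point_gspace not_False_eq_True)
  then show ?thesis
    using braid_tens_cls[OF \<open>0 < L\<close>, of D E] homeomorphic_map_braid[OF \<open>0 < L\<close>, of D E]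
    by blast
qed

end
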